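(* Let $S=(x_1,x_2,\dots,x_N)$ be a finite sequence of real numbers. For each term $x_j$ let $i(x_j)$ be the length of the longest strictly increasing subsequence of $S$ containing the term $x_j$, and let $d(x_j)$ be the length of the longest non-increasing subsequence of $S$ containing the term $x_j$ (if the terms are pairwise distinct, this is the longest decreasing subsequence containing $x_j$). Then \[ \sum_{j=1}^N\frac{1}{i(x_j)\,d(x_j)}\le 1. \]
   Context: Subsequences are taken by positions: a subsequence is $(x_{j_1},\dots,x_{j_m})$ with $j_1<\dots<j_m$, and it contains the term $x_j$ if $j\in\{j_1,\dots,j_m\}$. *)

theory Defs
  imports "HOL-Analysis.Analysis"
begin

text \<open>A subsequence of (x_0,...,x_{N-1}) is given by its set of positions J \<subseteq> {..<N};
  its terms are read in increasing order of position.\<close>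

definition strict_inc_subseq :: "(nat \<Rightarrow> real) \<Rightarrow> nat \<Rightarrow> nat set \<Rightarrow> bool" where
  "strict_inc_subseq x N J \<longleftrightarrow> J \<subseteq> {..<N} \<and> (\<forall>j\<in>J. \<forall>k\<in>J. j < k \<longrightarrow> x j < x k)"

definition nonincr_subseq :: "(nat \<Rightarrow> real) \<Rightarrow> nat \<Rightarrow> nat set \<Rightarrow> bool" where
  "nonincr_subseq x N J \<longleftrightarrow> J \<subseteq> {..<N} \<and> (\<forall>j\<in>J. \<forall>k\<in>J. j < k \<longrightarrow> x j \<ge> x k)"

definition inc_len :: "(nat \<Rightarrow> real) \<Rightarrow> nat \<Rightarrow> nat \<Rightarrow> nat" where
  "inc_len x N j = Max {card J | J. strict_inc_subseq x N J \<and> j \<in> J}"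

definition dec_len :: "(nat \<Rightarrow> real) \<Rightarrow> nat \<Rightarrow> nat \<Rightarrow> nat" where
  "dec_len x N j = Max {card J | J. nonincr_subseq x N J \<and> j \<in> J}"

end

theory Submission
  imports Defs
begin

text \<open>Give the term at position v the weight w v = M / i(x_v), with M = N! so that all weights
  are natural numbers, and let a v be the largest total weight of a strictly increasing
  subsequence lying before x_v and below it (chain_weight_below). The intervals [a v, a v + w v) all lie in [0, M),
  because the weights of the terms of any increasing subsequence D are at most M / |D| each.
  If u < v and x_u < x_v then the interval of u ends before that of v starts, so the
  positions whose intervals contain a fixed point t form a nonincreasing subsequence A_t, for
  which the sum of 1 / d is at most 1. Counting the pairs (t, v) with t in the interval of v,
  weighted by 1 / d(x_v), gives M \<Sum> 1 / (i d) \<le> M.\<close>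

lemma finite_card_subseqs:
  fixes N :: nat
  shows "finite {card J | J. J \<subseteq> {..<N} \<and> P J}"
  by (rule finite_subset[of _ "card ` Pow {..<N}"]) (auto intro: finite_imageI)

lemma finite_strict_inc_subseq: "strict_inc_subseq x N J \<Longrightarrow> finite J"
  unfolding strict_inc_subseq_def using finite_subset by blast

lemma finite_nonincr_subseq: "nonincr_subseq x N J \<Longrightarrow> finite J"
  unfolding nonincr_subseq_def using finite_subset by blast

lemma inc_len_ge:
  assumes "strict_inc_subseq x N J" "j \<in> J"
  shows "card J \<le> inc_len x N j"
  unfolding inc_len_def using assms finite_card_subseqs[of N "\<lambda>J. strict_inc_subseq x N J \<and> j \<in> J"]
  by (intro Max_ge) (auto simp: strict_inc_subseq_def)

lemma dec_len_ge:
  assumes "nonincr_subseq x N J" "j \<in> J"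
  shows "card J \<le> dec_len x N j"
  unfolding dec_len_def using assms finite_card_subseqs[of N "\<lambda>J. nonincr_subseq x N J \<and> j \<in> J"]
  by (intro Max_ge) (auto simp: nonincr_subseq_def)

lemma inc_len_pos: "j < N \<Longrightarrow> 1 \<le> inc_len x N j"
  using inc_len_ge[of x N "{j}" j] by (simp add: strict_inc_subseq_def)

lemma inc_len_le_length: "j < N \<Longrightarrow> inc_len x N j \<le> N"
  unfolding inc_len_def using finite_card_subseqs[of N "\<lambda>J. strict_inc_subseq x N J \<and> j \<in> J"]
  by (subst Max_le_iff)
     (auto simp: strict_inc_subseq_def intro!: exI[of _ "{j}"] card_mono[of "{..<N}", simplified])

lemma real_fact_div_inc_len:
  "j < N \<Longrightarrow> real (fact N div inc_len x N j) = fact N / real (inc_len x N j)"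
  using inc_len_pos[of j N x] inc_len_le_length[of j N x]
  by (subst real_of_nat_div) (auto intro: dvd_fact)

lemma sum_inverse_dec_len_le_1:
  assumes "nonincr_subseq x N A"
  shows "(\<Sum>v\<in>A. 1 / real (dec_len x N v)) \<le> 1"
proof (cases "A = {}")
  case False
  have "finite A" using assms by (rule finite_nonincr_subseq)
  with False have "card A > 0" by auto
  have "(\<Sum>v\<in>A. 1 / real (dec_len x N v)) \<le> (\<Sum>v\<in>A. 1 / real (card A))"
  proof (rule sum_mono)
    fix v assume "v \<in> A"
    then have "card A \<le> dec_len x N v" by (rule dec_len_ge[OF assms])
    then show "1 / real (dec_len x N v) \<le> 1 / real (card A)"
      using \<open>card A > 0\<close> by (simp add: frac_le)
  qed
  also have "\<dots> = 1" using \<open>card A > 0\<close> by simp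
  finally show ?thesis .
qed simp

lemma sum_div_inc_len_le:
  assumes "strict_inc_subseq x N D"
  shows "(\<Sum>c\<in>D. M div inc_len x N c) \<le> M"
proof (cases "D = {}")
  case False
  have "finite D" using assms by (rule finite_strict_inc_subseq)
  with False have "card D > 0" by auto
  have "(\<Sum>c\<in>D. M div inc_len x N c) \<le> (\<Sum>c\<in>D. M div card D)"
    using inc_len_ge[OF assms] \<open>card D > 0\<close> by (intro sum_mono div_le_mono2) auto
  also have "\<dots> = card D * (M div card D)" by simp
  also have "\<dots> \<le> M" by simp
  finally show ?thesis .
qed simp

lemma sum_card_weighted_le:
  fixes I :: "'a \<Rightarrow> nat set" and f :: "'a \<Rightarrow> real"
  assumes "finite V" and "\<And>v. v \<in> V \<Longrightarrow> I v \<subseteq> {..<M}"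
    and "\<And>t. t < M \<Longrightarrow> (\<Sum>v\<in>{v\<in>V. t \<in> I v}. f v) \<le> 1"
  shows "(\<Sum>v\<in>V. real (card (I v)) * f v) \<le> real M"
proof -
  have "real (card (I v)) * f v = (\<Sum>t<M. if t \<in> I v then f v else 0)" if "v \<in> V" for v
  proof -
    have "{..<M} \<inter> I v = I v" using assms(2)[OF that] by blast
    then show ?thesis by (simp add: sum.inter_restrict[symmetric])
  qed
  then have "(\<Sum>v\<in>V. real (card (I v)) * f v) = (\<Sum>t<M. \<Sum>v\<in>V. if t \<in> I v then f v else 0)"
    by (simp add: sum.swap[of _ "{..<M}"])
  also have "\<dots> = (\<Sum>t<M. \<Sum>v\<in>{v\<in>V. t \<in> I v}. f v)"
    using \<open>finite V\<close> by (simp add: sum.inter_filter)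
  also have "\<dots> \<le> (\<Sum>t<M. 1)" using assms(3) by (intro sum_mono) auto
  finally show ?thesis by simp
qed

definition chain_weight_below :: "(nat \<Rightarrow> real) \<Rightarrow> nat \<Rightarrow> (nat \<Rightarrow> nat) \<Rightarrow> nat \<Rightarrow> nat" where
  "chain_weight_below x N w v =
     Max (sum w ` {C. strict_inc_subseq x N C \<and> (\<forall>c\<in>C. c < v \<and> x c < x v)})"

lemma finite_strict_inc_subseqs: "finite {C. strict_inc_subseq x N C \<and> P C}"
  by (rule finite_subset[of _ "Pow {..<N}"]) (auto simp: strict_inc_subseq_def)

lemma chain_weight_below_ge:
  assumes "strict_inc_subseq x N C" "\<forall>c\<in>C. c < v \<and> x c < x v"
  shows "sum w C \<le> chain_weight_below x N w v"
  unfolding chain_weight_below_def using assms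
  by (intro Max_ge finite_imageI finite_strict_inc_subseqs) auto

lemma chain_weight_below_attained:
  obtains C where "strict_inc_subseq x N C" "\<forall>c\<in>C. c < v \<and> x c < x v"
    "chain_weight_below x N w v = sum w C"
proof -
  let ?S = "{C. strict_inc_subseq x N C \<and> (\<forall>c\<in>C. c < v \<and> x c < x v)}"
  have "finite ?S" by (rule finite_strict_inc_subseqs)
  moreover have "{} \<in> ?S" by (simp add: strict_inc_subseq_def)
  ultimately have "chain_weight_below x N w v \<in> sum w ` ?S"
    unfolding chain_weight_below_def by (intro Max_in) auto
  then show ?thesis using that by blast
qed

lemma strict_inc_subseq_insert_above:
  assumes "strict_inc_subseq x N C" "\<forall>c\<in>C. c < v \<and> x c < x v" "v < N"
  shows "strict_inc_subseq x N (insert v C)"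
proof -
  have "x j < x k" if "j \<in> insert v C" "k \<in> insert v C" "j < k" for j k
    using that assms(1,2) unfolding strict_inc_subseq_def by (auto dest: order.strict_trans)
  then show ?thesis using assms(1,3) by (auto simp: strict_inc_subseq_def)
qed

lemma chain_weight_below_step:
  assumes "u < v" "u < N" "x u < x v"
  shows "chain_weight_below x N w u + w u \<le> chain_weight_below x N w v"
proof -
  obtain C where C: "strict_inc_subseq x N C" "\<forall>c\<in>C. c < u \<and> x c < x u"
    and weight: "chain_weight_below x N w u = sum w C"
    by (rule chain_weight_below_attained)
  have "finite C" using C(1) by (rule finite_strict_inc_subseq)
  have "\<forall>c\<in>insert u C. c < v \<and> x c < x v"
    using C(2) assms by force
  then have "sum w (insert u C) \<le> chain_weight_below x N w v"
    by (intro chain_weight_below_ge strict_inc_subseq_insert_above[OF C \<open>u < N\<close>])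
  moreover have "sum w (insert u C) = w u + sum w C"
    using C(2) \<open>finite C\<close> by (subst sum.insert) auto
  ultimately show ?thesis using weight by simp
qed

lemma chain_weight_below_extend:
  assumes "v < N"
  obtains D where "strict_inc_subseq x N D" "sum w D = chain_weight_below x N w v + w v"
proof -
  obtain C where C: "strict_inc_subseq x N C" "\<forall>c\<in>C. c < v \<and> x c < x v"
    and weight: "chain_weight_below x N w v = sum w C"
    by (rule chain_weight_below_attained)
  have "finite C" using C(1) by (rule finite_strict_inc_subseq)
  then have "sum w (insert v C) = chain_weight_below x N w v + w v"
    using C(2) weight by (subst sum.insert) auto
  then show ?thesis using that strict_inc_subseq_insert_above[OF C assms] by blast
qed

lemma nonincr_subseq_stabbed_intervals:
  "nonincr_subseq x N
     {v. v < N \<and> t \<in> {chain_weight_below x N w v..<chain_weight_below x N w v + w v}}"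
  unfolding nonincr_subseq_def
proof (intro conjI ballI impI)
  fix j k
  assume "j \<in> {v. v < N \<and> t \<in> {chain_weight_below x N w v..<chain_weight_below x N w v + w v}}"
    and "k \<in> {v. v < N \<and> t \<in> {chain_weight_below x N w v..<chain_weight_below x N w v + w v}}"
    and "j < k"
  then show "x k \<le> x j"
    using chain_weight_below_step[of j k N x w] by (cases "x j < x k") auto
qed auto

theorem corollary11:
  fixes x :: "nat \<Rightarrow> real" and N :: nat
  shows "(\<Sum>j<N. 1 / (real (inc_len x N j) * real (dec_len x N j))) \<le> 1"
proof -
  define M :: nat where "M = fact N"
  define w where "w v = M div inc_len x N v" for v
  define I where "I v = {chain_weight_below x N w v..<chain_weight_below x N w v + w v}" for v
  have intervals_bounded: "I v \<subseteq> {..<M}" if v: "v < N" for v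
  proof -
    obtain D where "strict_inc_subseq x N D" "sum w D = chain_weight_below x N w v + w v"
      using chain_weight_below_extend[OF v] by blast
    then show ?thesis using sum_div_inc_len_le[of x N D M] by (auto simp: I_def w_def)
  qed
  have stabbed_sum: "(\<Sum>v\<in>{v\<in>{..<N}. t \<in> I v}. 1 / real (dec_len x N v)) \<le> 1" for t
    using sum_inverse_dec_len_le_1[OF nonincr_subseq_stabbed_intervals] by (simp add: I_def)
  have "real M * (\<Sum>v<N. 1 / (real (inc_len x N v) * real (dec_len x N v)))
      = (\<Sum>v<N. real (card (I v)) * (1 / real (dec_len x N v)))"
    unfolding sum_distrib_left
  proof (rule sum.cong[OF refl])
    fix v assume "v \<in> {..<N}"
    then have "real (card (I v)) = real M / real (inc_len x N v)"
      unfolding I_def w_def M_def by (simp add: real_fact_div_inc_len)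
    then show "real M * (1 / (real (inc_len x N v) * real (dec_len x N v)))
        = real (card (I v)) * (1 / real (dec_len x N v))"
      by simp
  qed
  also have "\<dots> \<le> real M"
    using intervals_bounded stabbed_sum by (intro sum_card_weighted_le) auto
  finally show ?thesis by (simp add: M_def)
qed

end
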